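(* For every NCIFS $\Phi$ on $X\subset\mathbb R^d$, $\operatorname{HD}(J(\Phi))\le B(\Phi)$.
   Context: Fix $d\in\mathbb N$ and a compact set $X\subset\mathbb R^d$ equal to the closure of its interior, such that $\partial X$ is smooth or $X$ is convex. $\|D\phi\|:=\sup_{x\in X}|\phi'(x)|$ for a conformal map $\phi$. An NCIFS $\Phi$ on $X$ is a sequence $\Phi^{(j)}=(\phi^{(j)}_i:X\to X)_{i\in I^{(j)}}$, $j\ge1$, of families indexed by finite or countably infinite sets, satisfying: - (open set condition) images of $\operatorname{int}X$ under distinct maps of the same $\Phi^{(j)}$ are disjoint; - (conformality) there is an open connected $V\supset X$ such that all maps extend to $C^1$ conformal diffeomorphisms of $V$ into $V$; - (bounded distortion) there is $K\ge1$ with $|\phi'(x)|\le K|\phi'(y)|$ for $x,y\in V$ and every composition $\phi^{(k)}_{\omega_k}\circ\cdots\circ\phi^{(l)}_{\omega_l}$; - (uniform contraction) $\|D\phi^{(j)}_i\|\le\eta<1$ for all $i,j$. For $\omega\in I^n=\prod_{j\le n}I^{(j)}$ let $\phi_\omega=\phi^{(1)}_{\omega_1}\circ\cdots\circ\phi^{(n)}_{\omega_n}$. Define $J(\Phi)=\bigcap_n\bigcup_{\omega\in I^n}\phi_\omega(X)$, $Z_n(t)=\sum_{\omega\in I^n}\|D\phi_\omega\|^t$, $\underline P(t)=\liminf_n\frac1n\log Z_n(t)$ and $B(\Phi)=\sup\{t\ge0:\underline P(t)>0\}$ (with $\sup\emptyset=0$). $\operatorname{HD}$ is Hausdorff dimension.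 *)

theory Defs
  imports "HOL-Analysis.Analysis"
begin

text \<open>delta-approximation of the s-dimensional Hausdorff measure, via countable covers
  by bounded sets of diameter at most delta (unbounded sets have infinite diameter).\<close>
definition hausdorff_pre :: "real \<Rightarrow> real \<Rightarrow> 'a::metric_space set \<Rightarrow> ennreal" where
  "hausdorff_pre s \<delta> A =
     (INF U \<in> {U :: nat \<Rightarrow> 'a set. A \<subseteq> (\<Union>i. U i) \<and> (\<forall>i. bounded (U i) \<and> diameter (U i) \<le> \<delta>)}.
        (\<Sum>i. ennreal (diameter (U i) powr s)))"

definition hausdorff_measure :: "real \<Rightarrow> 'a::metric_space set \<Rightarrow> ennreal" where
  "hausdorff_measure s A = (SUP \<delta> \<in> {0<..}. hausdorff_pre s \<delta> A)"

definition hausdorff_dim :: "'a::metric_space set \<Rightarrow> ereal" where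
  "hausdorff_dim A = Inf (ereal ` {s::real. s \<ge> 0 \<and> hausdorff_measure s A = 0})"

fun Ck_on :: "nat \<Rightarrow> 'a::euclidean_space set \<Rightarrow> ('a \<Rightarrow> real) \<Rightarrow> bool" where
  "Ck_on 0 U g = continuous_on U g"
| "Ck_on (Suc k) U g = ((\<forall>x\<in>U. g differentiable (at x)) \<and>
      (\<forall>v. Ck_on k U (\<lambda>x. frechet_derivative g (at x) v)))"

definition smooth_on :: "'a::euclidean_space set \<Rightarrow> ('a \<Rightarrow> real) \<Rightarrow> bool" where
  "smooth_on U g = (\<forall>k. Ck_on k U g)"

definition smooth_boundary :: "'a::euclidean_space set \<Rightarrow> bool" where
  "smooth_boundary X = (\<forall>p\<in>frontier X. \<exists>U g. open U \<and> p \<in> U \<and> smooth_on U g \<and>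
      (\<forall>x\<in>U. frechet_derivative g (at x) \<noteq> (\<lambda>_. 0)) \<and>
      X \<inter> U = {x\<in>U. g x \<le> 0})"

definition conformal_C1_on :: "'a::euclidean_space set \<Rightarrow> ('a \<Rightarrow> 'a) \<Rightarrow> bool" where
  "conformal_C1_on V f = (inj_on f V \<and> f ` V \<subseteq> V \<and>
     (\<exists>D :: 'a \<Rightarrow> ('a \<Rightarrow>\<^sub>L 'a). continuous_on V D \<and>
        (\<forall>x\<in>V. (f has_derivative blinfun_apply (D x)) (at x) \<and>
                 (\<exists>c>0. \<forall>u. norm (D x u) = c * norm u))))"

text \<open>|f'(x)|: the (conformal) scaling factor of the derivative, i.e. its operator norm.\<close>
definition deriv_norm :: "('a::euclidean_space \<Rightarrow> 'a) \<Rightarrow> 'a \<Rightarrow> real" where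
  "deriv_norm f x = onorm (frechet_derivative f (at x))"

definition Dnorm :: "'a::euclidean_space set \<Rightarrow> ('a \<Rightarrow> 'a) \<Rightarrow> real" where
  "Dnorm X f = (SUP x\<in>X. deriv_norm f x)"

text \<open>phi j i is the map phi^(j)_i (j >= 1, i in I j). Index sets are subsets of nat
  (hence finite or countably infinite). cmp phi w k m = phi k (w k) o ... o phi (k+m-1) (w (k+m-1)).\<close>
fun cmp :: "(nat \<Rightarrow> nat \<Rightarrow> 'a \<Rightarrow> 'a) \<Rightarrow> (nat \<Rightarrow> nat) \<Rightarrow> nat \<Rightarrow> nat \<Rightarrow> 'a \<Rightarrow> 'a" where
  "cmp \<phi> w k 0 = id"
| "cmp \<phi> w k (Suc m) = cmp \<phi> w k m \<circ> \<phi> (k + m) (w (k + m))"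

definition words :: "(nat \<Rightarrow> nat set) \<Rightarrow> nat \<Rightarrow> (nat \<Rightarrow> nat) set" where
  "words I n = PiE {1..n} I"

definition ncifs :: "'a::euclidean_space set \<Rightarrow> (nat \<Rightarrow> nat set) \<Rightarrow> (nat \<Rightarrow> nat \<Rightarrow> 'a \<Rightarrow> 'a) \<Rightarrow> bool" where
  "ncifs X I \<phi> =
    ((\<forall>j\<ge>1. \<forall>i\<in>I j. \<phi> j i ` X \<subseteq> X) \<and>
     \<comment> \<open>open set condition\<close>
     (\<forall>j\<ge>1. \<forall>i\<in>I j. \<forall>i'\<in>I j. i \<noteq> i' \<longrightarrow> \<phi> j i ` interior X \<inter> \<phi> j i' ` interior X = {}) \<and>
     \<comment> \<open>conformality and bounded distortion\<close>
     (\<exists>V K. open V \<and> connected V \<and> X \<subseteq> V \<and>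
        (\<forall>j\<ge>1. \<forall>i\<in>I j. conformal_C1_on V (\<phi> j i)) \<and>
        K \<ge> 1 \<and>
        (\<forall>k\<ge>1. \<forall>m\<ge>1. \<forall>w. (\<forall>j\<in>{k..<k+m}. w j \<in> I j) \<longrightarrow>
           (\<forall>x\<in>V. \<forall>y\<in>V. deriv_norm (cmp \<phi> w k m) x \<le> K * deriv_norm (cmp \<phi> w k m) y))) \<and>
     \<comment> \<open>uniform contraction\<close>
     (\<exists>\<eta><1. \<forall>j\<ge>1. \<forall>i\<in>I j. Dnorm X (\<phi> j i) \<le> \<eta>))"

definition limit_set :: "'a set \<Rightarrow> (nat \<Rightarrow> nat set) \<Rightarrow> (nat \<Rightarrow> nat \<Rightarrow> 'a \<Rightarrow> 'a) \<Rightarrow> 'a set" where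
  "limit_set X I \<phi> = (\<Inter>n. \<Union>w\<in>words I n. cmp \<phi> w 1 n ` X)"

definition Zn :: "'a::euclidean_space set \<Rightarrow> (nat \<Rightarrow> nat set) \<Rightarrow> (nat \<Rightarrow> nat \<Rightarrow> 'a \<Rightarrow> 'a)
                   \<Rightarrow> nat \<Rightarrow> real \<Rightarrow> ennreal" where
  "Zn X I \<phi> n t = infsum (\<lambda>w. ennreal (Dnorm X (cmp \<phi> w 1 n) powr t)) (words I n)"

definition ln_ennreal :: "ennreal \<Rightarrow> ereal" where
  "ln_ennreal z = (if z = 0 then -\<infinity> else if z = top then \<infinity> else ereal (ln (enn2real z)))"

definition lower_pressure :: "'a::euclidean_space set \<Rightarrow> (nat \<Rightarrow> nat set) \<Rightarrow> (nat \<Rightarrow> nat \<Rightarrow> 'a \<Rightarrow> 'a)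
                   \<Rightarrow> real \<Rightarrow> ereal" where
  "lower_pressure X I \<phi> t = liminf (\<lambda>n. ln_ennreal (Zn X I \<phi> n t) / ereal (real n))"

definition bowen_param :: "'a::euclidean_space set \<Rightarrow> (nat \<Rightarrow> nat set) \<Rightarrow> (nat \<Rightarrow> nat \<Rightarrow> 'a \<Rightarrow> 'a) \<Rightarrow> ereal" where
  "bowen_param X I \<phi> =
     (let S = {t::real. t \<ge> 0 \<and> lower_pressure X I \<phi> t > 0} in
      if S = {} then 0 else Sup (ereal ` S))"

end

theory Submission
  imports Defs
begin

text \<open>Take \<open>t < s\<close> with \<open>t\<close> above the Bowen parameter. The lower pressure at \<open>t\<close> is then
  \<open>\<le> 0\<close>, so for every \<open>\<epsilon> > 0\<close> infinitely many \<open>n\<close> satisfy \<open>Z\<^sub>n(t) \<le> e\<^bsup>\<epsilon>n\<^esup>\<close>. By bounded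
  distortion and the mean value inequality, the image under \<open>\<phi>\<^sub>\<omega>\<close> (\<open>\<omega> \<in> I\<^sup>n\<close>) of a ball of radius
  \<open>e\<close> centred in \<open>X\<close> has diameter at most \<open>2eK\<parallel>D\<phi>\<^sub>\<omega>\<parallel> \<le> 2eK\<eta>\<^sup>n\<close>. Covering \<open>J\<close> by these images
  for finitely many such balls, the \<open>s\<close>-dimensional sum is at most a constant times
  \<open>\<eta>\<^bsup>n(s-t)\<^esup> Z\<^sub>n(t)\<close>, which tends to \<open>0\<close> along those \<open>n\<close> once \<open>\<epsilon>\<close> is small. Hence
  \<open>H\<^sup>s(J) = 0\<close> for all \<open>s > B(\<Phi>)\<close>.\<close>

lemma ennreal_sum_le_infsum:
  fixes f :: "'a \<Rightarrow> ennreal"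
  assumes "finite F" "F \<subseteq> A"
  shows "sum f F \<le> infsum f A"
proof -
  have "sum f F \<le> (SUP G\<in>{G. finite G \<and> G \<subseteq> A}. sum f G)"
    using assms by (intro SUP_upper) auto
  also have "\<dots> = infsum f A"
    by (rule nonneg_infsum_complete[symmetric]) simp
  finally show ?thesis .
qed

lemma hausdorff_pre_le_infsum_cover:
  fixes U :: "'b \<Rightarrow> 'a::metric_space set"
  assumes A: "countable A" and cover: "S \<subseteq> (\<Union>a\<in>A. U a)"
    and small: "\<And>a. a \<in> A \<Longrightarrow> bounded (U a) \<and> diameter (U a) \<le> \<delta>" and "\<delta> \<ge> 0"
  shows "hausdorff_pre s \<delta> S \<le> infsum (\<lambda>a. ennreal (diameter (U a) powr s)) A"
proof -
  \<comment> \<open>Re-index the cover by \<open>nat\<close>, padding with empty sets.\<close>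
  define V where "V k = (if k \<in> to_nat_on A ` A then U (from_nat_into A k) else {})" for k
  define g where "g k = ennreal (diameter (V k) powr s)" for k
  have "S \<subseteq> (\<Union>k. V k)"
  proof
    fix x assume "x \<in> S"
    then obtain a where a: "a \<in> A" "x \<in> U a" using cover by blast
    then have "V (to_nat_on A a) = U a" using A by (simp add: V_def)
    then show "x \<in> (\<Union>k. V k)" using a by blast
  qed
  moreover have "bounded (V k) \<and> diameter (V k) \<le> \<delta>" for k
    using small[of "from_nat_into A k"] \<open>\<delta> \<ge> 0\<close> A by (auto simp: V_def)
  ultimately have "hausdorff_pre s \<delta> S \<le> (\<Sum>k. g k)"
    unfolding hausdorff_pre_def g_def by (intro INF_lower) auto
  also have "(\<Sum>k. g k) = (SUP n. \<Sum>k<n. g k)" by (simp add: suminf_eq_SUP)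
  also have "\<dots> \<le> infsum g UNIV"
    by (auto intro!: SUP_least ennreal_sum_le_infsum)
  also have "infsum g UNIV = infsum g (to_nat_on A ` A)"
    by (rule infsum_cong_neutral) (auto simp: g_def V_def)
  also have "\<dots> = infsum (g \<circ> to_nat_on A) A"
    using A by (intro infsum_reindex) auto
  also have "\<dots> = infsum (\<lambda>a. ennreal (diameter (U a) powr s)) A"
    using A by (intro infsum_cong) (auto simp: g_def V_def)
  finally show ?thesis .
qed

lemma infsum_Times_finite_le:
  fixes h :: "'b \<Rightarrow> ennreal"
  assumes F: "finite F"
  shows "infsum (\<lambda>p. c * h (fst p)) (A \<times> F) \<le> of_nat (card F) * c * infsum h A"
proof -
  have "sum (\<lambda>p. c * h (fst p)) G \<le> of_nat (card F) * c * infsum h A"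
    if G: "finite G" "G \<subseteq> A \<times> F" for G
  proof -
    have fG: "finite (fst ` G)" using G by auto
    have "sum (\<lambda>p. c * h (fst p)) G \<le> sum (\<lambda>p. c * h (fst p)) (fst ` G \<times> F)"
      by (rule sum_mono2) (use G F fG in force)+
    also have "\<dots> = (\<Sum>a\<in>fst ` G. \<Sum>b\<in>F. c * h a)"
      by (simp only: sum.cartesian_product split_def)
    also have "\<dots> = of_nat (card F) * c * sum h (fst ` G)"
      by (simp add: sum_distrib_left mult.assoc)
    also have "sum h (fst ` G) \<le> infsum h A"
      using G fG by (intro ennreal_sum_le_infsum) auto
    then have "of_nat (card F) * c * sum h (fst ` G) \<le> of_nat (card F) * c * infsum h A"
      by (rule mult_left_mono) simp
    finally show ?thesis .
  qed
  then have "(SUP G\<in>{G. finite G \<and> G \<subseteq> A \<times> F}. sum (\<lambda>p. c * h (fst p)) G)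
      \<le> of_nat (card F) * c * infsum h A"
    by (intro SUP_least) blast
  then show ?thesis
    by (subst nonneg_infsum_complete) simp_all
qed

lemma conformal_C1_on_differentiable:
  "conformal_C1_on V f \<Longrightarrow> x \<in> V \<Longrightarrow> f differentiable (at x)"
  unfolding conformal_C1_on_def differentiable_def by blast

lemma conformal_C1_on_maps_into:
  "conformal_C1_on V f \<Longrightarrow> x \<in> V \<Longrightarrow> f x \<in> V"
  unfolding conformal_C1_on_def by blast

lemma deriv_norm_nonneg: "f differentiable (at x) \<Longrightarrow> 0 \<le> deriv_norm f x"
  unfolding deriv_norm_def
  using frechet_derivative_works has_derivative_bounded_linear onorm_pos_le by blast

lemma deriv_norm_id: "deriv_norm id x \<le> 1"
proof -
  have "frechet_derivative id (at x) = (\<lambda>y. y)"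
    using frechet_derivative_at[OF has_derivative_ident, of x] by (simp add: id_def)
  then show ?thesis unfolding deriv_norm_def using onorm_id_le by metis
qed

lemma deriv_norm_compose_le:
  assumes "g differentiable (at x)" "f differentiable (at (g x))"
  shows "deriv_norm (f \<circ> g) x \<le> deriv_norm f (g x) * deriv_norm g x"
  unfolding deriv_norm_def frechet_derivative_compose[OF assms]
  by (rule onorm_compose)
    (use assms frechet_derivative_works has_derivative_bounded_linear in blast)+

lemma deriv_norm_le_Dnorm:
  "bdd_above (deriv_norm f ` X) \<Longrightarrow> x \<in> X \<Longrightarrow> deriv_norm f x \<le> Dnorm X f"
  unfolding Dnorm_def by (rule cSUP_upper)

lemma diameter_image_subset_cball_le:
  fixes f :: "'a::euclidean_space \<Rightarrow> 'a"
  assumes diff: "\<And>y. y \<in> cball c e \<Longrightarrow> f differentiable (at y)"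
    and bound: "\<And>y. y \<in> cball c e \<Longrightarrow> deriv_norm f y \<le> L"
    and S: "S \<subseteq> cball c e" and L: "L \<ge> 0" and e: "e \<ge> 0"
  shows "bounded (f ` S) \<and> diameter (f ` S) \<le> 2 * e * L"
proof -
  have lip: "norm (f y - f z) \<le> L * norm (y - z)" if "y \<in> cball c e" "z \<in> cball c e" for y z
  proof (rule differentiable_bound[where f'="\<lambda>x. frechet_derivative f (at x)"])
    show "(f has_derivative frechet_derivative f (at x)) (at x within cball c e)"
      if "x \<in> cball c e" for x
      using diff[OF that] frechet_derivative_works has_derivative_at_withinI by blast
    show "onorm (frechet_derivative f (at x)) \<le> L" if "x \<in> cball c e" for x
      using bound[OF that] by (simp add: deriv_norm_def)
  qed (use that in auto)
  have c: "c \<in> cball c e" using e by simp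
  have "f ` S \<subseteq> cball (f c) (L * e)"
  proof
    fix u assume "u \<in> f ` S"
    then obtain y where y: "y \<in> S" "u = f y" by auto
    have "norm (f c - f y) \<le> L * norm (c - y)" using lip[OF c] y S by auto
    also have "\<dots> \<le> L * e" using y S L by (intro mult_left_mono) (auto simp: dist_norm)
    finally show "u \<in> cball (f c) (L * e)" using y by (simp add: dist_norm)
  qed
  then have "bounded (f ` S)" using bounded_cball bounded_subset by blast
  moreover have "diameter (f ` S) \<le> 2 * e * L"
  proof (rule diameter_le)
    show "f ` S \<noteq> {} \<or> 0 \<le> 2 * e * L" using L e by simp
    fix u v assume "u \<in> f ` S" "v \<in> f ` S"
    then obtain y z where yz: "y \<in> S" "z \<in> S" "u = f y" "v = f z" by auto
    have lip_yz: "norm (f y - f z) \<le> L * norm (y - z)" using lip yz(1,2) S by blast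
    have "dist c y \<le> e" "dist c z \<le> e" using yz(1,2) S by auto
    then have "norm (y - z) \<le> 2 * e"
      using norm_diff_triangle_le[of y c "dist c y" z "dist c z"]
      by (simp add: dist_norm norm_minus_commute)
    then have "L * norm (y - z) \<le> L * (2 * e)" using L by (rule mult_left_mono)
    with lip_yz show "norm (u - v) \<le> 2 * e * L" using yz by (simp add: algebra_simps)
  qed
  ultimately show ?thesis by simp
qed

lemma powr_le_powr_mult_power:
  fixes D \<eta> s t :: real
  assumes "0 \<le> D" "D \<le> \<eta> ^ n" "0 < \<eta>" "t \<le> s"
  shows "D powr s \<le> D powr t * (\<eta> powr (s - t)) ^ n"
proof (cases "D = 0")
  case False
  have "D powr s = D powr t * D powr (s - t)"
    by (simp add: powr_add[symmetric])
  also have "D powr (s - t) \<le> (\<eta> ^ n) powr (s - t)"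
    using assms by (intro powr_mono2) auto
  also have "(\<eta> ^ n) powr (s - t) = (\<eta> powr (s - t)) ^ n"
    using \<open>0 < \<eta>\<close> by (simp add: powr_realpow[symmetric] powr_powr mult.commute)
  finally show ?thesis using False \<open>0 \<le> D\<close> by (simp add: mult_left_mono)
qed simp

lemma le_exp_power_if_ln_ennreal_div_less:
  assumes n: "n \<ge> 1" and less: "ln_ennreal Z / ereal (real n) < ereal \<epsilon>"
  shows "Z \<le> ennreal (exp \<epsilon> ^ n)"
proof (cases Z)
  case (real z)
  show ?thesis
  proof (cases "z = 0")
    case False
    then have "z > 0" using real by simp
    then have "ln_ennreal Z = ereal (ln z)" using real by (simp add: ln_ennreal_def)
    with less n have "ln z < real n * \<epsilon>" by (simp add: divide_less_eq mult.commute)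
    then have "z < exp (real n * \<epsilon>)" using \<open>z > 0\<close> by (metis exp_less_cancel_iff exp_ln)
    then show ?thesis using real by (simp add: exp_of_nat_mult ennreal_leI)
  qed (use real in simp)
next
  case top
  then show ?thesis using less n by (simp add: ln_ennreal_def)
qed

lemma frequently_Zn_le_exp_power:
  assumes P: "lower_pressure X I \<phi> t \<le> 0" and "0 < \<epsilon>"
  shows "frequently (\<lambda>n. Zn X I \<phi> n t \<le> ennreal (exp \<epsilon> ^ n)) sequentially"
proof -
  have "frequently (\<lambda>n. ln_ennreal (Zn X I \<phi> n t) / ereal (real n) < ereal \<epsilon>) sequentially"
  proof (rule ccontr)
    assume "\<not> ?thesis"
    then have "eventually (\<lambda>n. ereal \<epsilon> \<le> ln_ennreal (Zn X I \<phi> n t) / ereal (real n)) sequentially"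
      by (simp add: not_frequently not_less)
    then have "ereal \<epsilon> \<le> lower_pressure X I \<phi> t"
      unfolding lower_pressure_def by (rule Liminf_bounded)
    also note P
    finally show False using \<open>0 < \<epsilon>\<close> by simp
  qed
  moreover have "eventually (\<lambda>n. n \<ge> 1) sequentially" by (rule eventually_ge_at_top)
  ultimately show ?thesis
    by (rule frequently_eventually_frequently[THEN frequently_elim1])
      (use le_exp_power_if_ln_ennreal_div_less in blast)
qed

lemma bowen_param_nonneg: "0 \<le> bowen_param X I \<phi>"
proof -
  define S where "S = {t::real. t \<ge> 0 \<and> lower_pressure X I \<phi> t > 0}"
  have "0 \<le> Sup (ereal ` S)" if "t \<in> S" for t
  proof -
    have "ereal 0 \<le> ereal t" using that by (simp add: S_def)
    also have "\<dots> \<le> Sup (ereal ` S)" using that by (intro Sup_upper) simp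
    finally show ?thesis by (simp add: zero_ereal_def)
  qed
  then show ?thesis
    unfolding bowen_param_def Let_def S_def[symmetric] by auto
qed

lemma lower_pressure_nonpos_above_bowen_param:
  assumes "0 \<le> t" "bowen_param X I \<phi> < ereal t"
  shows "lower_pressure X I \<phi> t \<le> 0"
proof (rule ccontr)
  define S where "S = {t::real. t \<ge> 0 \<and> lower_pressure X I \<phi> t > 0}"
  assume "\<not> lower_pressure X I \<phi> t \<le> 0"
  then have "t \<in> S" using \<open>0 \<le> t\<close> by (simp add: S_def)
  then have "ereal t \<le> bowen_param X I \<phi>"
    unfolding bowen_param_def Let_def S_def[symmetric] by (auto intro: Sup_upper)
  with assms(2) show False by simp
qed

lemma hausdorff_dim_le_if_measure_zero_above:
  fixes A :: "'a::metric_space set"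
  assumes "0 \<le> b" and zero: "\<And>s. b < ereal s \<Longrightarrow> hausdorff_measure s A = 0"
  shows "hausdorff_dim A \<le> b"
proof (cases b)
  case (real r)
  show ?thesis
  proof (rule ereal_le_epsilon2)
    fix e :: real assume "0 < e"
    then have "ereal (r + e) \<in> ereal ` {s. s \<ge> 0 \<and> hausdorff_measure s A = 0}"
      using zero[of "r + e"] real \<open>0 \<le> b\<close> by auto
    then have "hausdorff_dim A \<le> ereal (r + e)"
      unfolding hausdorff_dim_def by (rule Inf_lower)
    then show "hausdorff_dim A \<le> b + ereal e" using real by simp
  qed
qed (use \<open>0 \<le> b\<close> in auto)

lemma cmp_one: "cmp \<phi> w k 1 = \<phi> k (w k)"
  using cmp.simps(2)[of \<phi> w k 0] by simp

lemma words_memD: "w \<in> words I n \<Longrightarrow> \<forall>j\<in>{1..<1+n}. w j \<in> I j"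
  by (auto simp: words_def PiE_iff)

locale ncifs_constants =
  fixes X :: "'a::euclidean_space set" and I :: "nat \<Rightarrow> nat set"
    and \<phi> :: "nat \<Rightarrow> nat \<Rightarrow> 'a \<Rightarrow> 'a" and V :: "'a set" and K \<eta> :: real
  assumes compact_X: "compact X"
    and maps_into_X: "\<And>j i. j \<ge> 1 \<Longrightarrow> i \<in> I j \<Longrightarrow> \<phi> j i ` X \<subseteq> X"
    and open_V: "open V" and X_subset_V: "X \<subseteq> V"
    and conformal: "\<And>j i. j \<ge> 1 \<Longrightarrow> i \<in> I j \<Longrightarrow> conformal_C1_on V (\<phi> j i)"
    and K_ge_1: "1 \<le> K"
    and bounded_distortion: "\<And>k m w x y. k \<ge> 1 \<Longrightarrow> m \<ge> 1 \<Longrightarrow> \<forall>j\<in>{k..<k+m}. w j \<in> I j \<Longrightarrow>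
      x \<in> V \<Longrightarrow> y \<in> V \<Longrightarrow> deriv_norm (cmp \<phi> w k m) x \<le> K * deriv_norm (cmp \<phi> w k m) y"
    and eta_pos: "0 < \<eta>" and eta_less_1: "\<eta> < 1"
    and Dnorm_le_eta: "\<And>j i. j \<ge> 1 \<Longrightarrow> i \<in> I j \<Longrightarrow> Dnorm X (\<phi> j i) \<le> \<eta>"
begin

lemma bdd_above_deriv_norm_cmp:
  assumes "k \<ge> 1" "m \<ge> 1" "\<forall>j\<in>{k..<k+m}. w j \<in> I j"
  shows "bdd_above (deriv_norm (cmp \<phi> w k m) ` X)"
proof (cases "X = {}")
  case False
  then obtain x0 where "x0 \<in> X" by blast
  then have "\<forall>x\<in>X. deriv_norm (cmp \<phi> w k m) x \<le> K * deriv_norm (cmp \<phi> w k m) x0"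
    using bounded_distortion[OF assms] X_subset_V by blast
  then show ?thesis by (auto intro: bdd_aboveI2)
qed simp

lemma deriv_norm_le_eta:
  assumes "j \<ge> 1" "i \<in> I j" "x \<in> X"
  shows "deriv_norm (\<phi> j i) x \<le> \<eta>"
proof -
  have "bdd_above (deriv_norm (\<phi> j i) ` X)"
    using bdd_above_deriv_norm_cmp[of j 1 "\<lambda>_. i"] assms by (simp add: cmp_one)
  then show ?thesis
    using deriv_norm_le_Dnorm Dnorm_le_eta assms by (meson order_trans)
qed

lemma cmp_differentiable_in_V:
  assumes "k \<ge> 1" "\<forall>j\<in>{k..<k+m}. w j \<in> I j" "x \<in> V"
  shows "cmp \<phi> w k m differentiable (at x) \<and> cmp \<phi> w k m x \<in> V"
  using assms(2,3)
proof (induction m arbitrary: x)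
  case (Suc m)
  let ?g = "\<phi> (k+m) (w (k+m))"
  have g: "conformal_C1_on V ?g" using conformal assms(1) Suc.prems(1) by auto
  have "cmp \<phi> w k m differentiable (at (?g x)) \<and> cmp \<phi> w k m (?g x) \<in> V"
    using Suc.IH conformal_C1_on_maps_into[OF g Suc.prems(2)] Suc.prems(1) by auto
  then show ?case
    using conformal_C1_on_differentiable[OF g Suc.prems(2)]
    by (auto intro: differentiable_chain_at simp del: o_apply) simp
qed (simp add: id_def)

lemma deriv_norm_cmp_le_power:
  assumes "k \<ge> 1" "\<forall>j\<in>{k..<k+m}. w j \<in> I j" "x \<in> X"
  shows "deriv_norm (cmp \<phi> w k m) x \<le> \<eta> ^ m"
  using assms(2,3)
proof (induction m arbitrary: x)
  case 0
  then show ?case using deriv_norm_id[of x] by (simp add: id_def)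
next
  case (Suc m)
  let ?g = "\<phi> (k+m) (w (k+m))"
  have wi: "w (k+m) \<in> I (k+m)" and w: "\<forall>j\<in>{k..<k+m}. w j \<in> I j"
    using Suc.prems(1) by auto
  have g: "conformal_C1_on V ?g" using conformal assms(1) wi by auto
  have gx: "?g x \<in> X" using maps_into_X[of "k+m" "w (k+m)"] assms(1) wi Suc.prems(2) by auto
  have dg: "?g differentiable (at x)"
    using conformal_C1_on_differentiable[OF g] Suc.prems(2) X_subset_V by auto
  have dcmp: "cmp \<phi> w k m differentiable (at (?g x))"
    using cmp_differentiable_in_V[OF assms(1) w] gx X_subset_V by auto
  have "deriv_norm (cmp \<phi> w k (Suc m)) x \<le> deriv_norm (cmp \<phi> w k m) (?g x) * deriv_norm ?g x"
    using deriv_norm_compose_le[OF dg dcmp] by simp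
  also have "\<dots> \<le> \<eta> ^ m * \<eta>"
    using Suc.IH[OF w gx] deriv_norm_le_eta[OF _ wi Suc.prems(2)] assms(1)
      deriv_norm_nonneg[OF dg] deriv_norm_nonneg[OF dcmp]
    by (intro mult_mono) auto
  finally show ?case by (simp add: mult.commute del: o_apply)
qed

lemma Dnorm_cmp_le_power:
  assumes "X \<noteq> {}" "w \<in> words I n"
  shows "Dnorm X (cmp \<phi> w 1 n) \<le> \<eta> ^ n"
  unfolding Dnorm_def
  using assms deriv_norm_cmp_le_power[OF _ words_memD] by (intro cSUP_least) auto

lemma deriv_norm_cmp_le_Dnorm:
  assumes "n \<ge> 1" "w \<in> words I n" "x \<in> X"
  shows "deriv_norm (cmp \<phi> w 1 n) x \<le> Dnorm X (cmp \<phi> w 1 n)"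
  using assms bdd_above_deriv_norm_cmp[OF _ _ words_memD] by (intro deriv_norm_le_Dnorm) auto

lemma deriv_norm_cmp_le_K_Dnorm:
  assumes "n \<ge> 1" "w \<in> words I n" "x0 \<in> X" "y \<in> V"
  shows "deriv_norm (cmp \<phi> w 1 n) y \<le> K * Dnorm X (cmp \<phi> w 1 n)"
proof -
  have "deriv_norm (cmp \<phi> w 1 n) y \<le> K * deriv_norm (cmp \<phi> w 1 n) x0"
    using bounded_distortion[OF _ assms(1) words_memD[OF assms(2)]] assms(3,4) X_subset_V by auto
  also have "\<dots> \<le> K * Dnorm X (cmp \<phi> w 1 n)"
    using deriv_norm_cmp_le_Dnorm[OF assms(1-3)] K_ge_1 by simp
  finally show ?thesis .
qed

lemma Dnorm_cmp_nonneg: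
  assumes "n \<ge> 1" "w \<in> words I n" "x0 \<in> X"
  shows "0 \<le> Dnorm X (cmp \<phi> w 1 n)"
  using deriv_norm_nonneg deriv_norm_cmp_le_Dnorm[OF assms]
    cmp_differentiable_in_V[OF _ words_memD[OF assms(2)]] assms(3) X_subset_V
  by (meson order_trans subsetD order_refl)

lemma diameter_cmp_image_le:
  assumes "n \<ge> 1" "w \<in> words I n" "c \<in> X" "cball c e \<subseteq> V" "0 \<le> e"
  shows "bounded (cmp \<phi> w 1 n ` (X \<inter> cball c e))
    \<and> diameter (cmp \<phi> w 1 n ` (X \<inter> cball c e)) \<le> 2 * e * (K * Dnorm X (cmp \<phi> w 1 n))"
proof (rule diameter_image_subset_cball_le)
  show "cmp \<phi> w 1 n differentiable (at y)" if "y \<in> cball c e" for y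
    using cmp_differentiable_in_V[OF _ words_memD[OF assms(2)]] assms(4) that by auto
  show "deriv_norm (cmp \<phi> w 1 n) y \<le> K * Dnorm X (cmp \<phi> w 1 n)" if "y \<in> cball c e" for y
    using deriv_norm_cmp_le_K_Dnorm[OF assms(1-3)] assms(4) that by auto
  show "0 \<le> K * Dnorm X (cmp \<phi> w 1 n)"
    using Dnorm_cmp_nonneg[OF assms(1-3)] K_ge_1 by simp
qed (use assms in auto)

lemma diameter_cmp_image_powr_le:
  assumes "n \<ge> 1" "w \<in> words I n" "c \<in> X" "cball c e \<subseteq> V" "0 \<le> e" "0 \<le> t" "t \<le> s"
  shows "diameter (cmp \<phi> w 1 n ` (X \<inter> cball c e)) powr s
    \<le> (2 * e * K) powr s * (\<eta> powr (s - t)) ^ n * Dnorm X (cmp \<phi> w 1 n) powr t"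
proof -
  let ?D = "Dnorm X (cmp \<phi> w 1 n)"
  have D: "0 \<le> ?D" "?D \<le> \<eta> ^ n"
    using Dnorm_cmp_nonneg[OF assms(1-3)] Dnorm_cmp_le_power[OF _ assms(2)] assms(3) by auto
  have "diameter (cmp \<phi> w 1 n ` (X \<inter> cball c e)) powr s \<le> (2 * e * K * ?D) powr s"
    using diameter_cmp_image_le[OF assms(1-5)] diameter_ge_0 assms(6,7)
    by (intro powr_mono2) (auto simp: mult.assoc)
  also have "\<dots> = (2 * e * K) powr s * ?D powr s"
    using D assms(5) K_ge_1 by (simp add: powr_mult)
  also have "\<dots> \<le> (2 * e * K) powr s * (?D powr t * (\<eta> powr (s - t)) ^ n)"
    using powr_le_powr_mult_power[OF D eta_pos assms(7)] by (intro mult_left_mono) auto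
  finally show ?thesis by (simp add: algebra_simps)
qed

lemma hausdorff_pre_limit_set_le:
  assumes F: "finite F" "F \<subseteq> X" "X \<subseteq> (\<Union>c\<in>F. ball c e)"
    and e: "0 < e" "\<And>c. c \<in> X \<Longrightarrow> cball c e \<subseteq> V"
    and n: "n \<ge> 1" and \<delta>: "2 * e * K * \<eta> ^ n \<le> \<delta>" and "0 \<le> t" "t \<le> s"
  shows "hausdorff_pre s \<delta> (limit_set X I \<phi>)
    \<le> of_nat (card F) * ennreal ((2 * e * K) powr s * (\<eta> powr (s - t)) ^ n) * Zn X I \<phi> n t"
proof -
  define U where "U p = cmp \<phi> (fst p) 1 n ` (X \<inter> cball (snd p) e)" for p
  define scale where "scale = (2 * e * K) powr s * (\<eta> powr (s - t)) ^ n"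
  have small: "bounded (U p) \<and> diameter (U p) \<le> \<delta>" if p: "p \<in> words I n \<times> F" for p
  proof -
    have c: "snd p \<in> X" and w: "fst p \<in> words I n" using p F(2) by auto
    then have "Dnorm X (cmp \<phi> (fst p) 1 n) \<le> \<eta> ^ n"
      using Dnorm_cmp_le_power by blast
    then have "2 * e * (K * Dnorm X (cmp \<phi> (fst p) 1 n)) \<le> 2 * e * K * \<eta> ^ n"
      using e(1) K_ge_1 by (simp add: mult.assoc)
    moreover have "bounded (U p) \<and> diameter (U p) \<le> 2 * e * (K * Dnorm X (cmp \<phi> (fst p) 1 n))"
      using diameter_cmp_image_le[OF n w c e(2)[OF c]] e(1) by (simp add: U_def)
    ultimately show ?thesis using \<delta> by linarith
  qed
  have summand_le: "ennreal (diameter (U p) powr s)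
      \<le> ennreal scale * ennreal (Dnorm X (cmp \<phi> (fst p) 1 n) powr t)"
    if p: "p \<in> words I n \<times> F" for p
  proof -
    have c: "snd p \<in> X" using p F(2) by auto
    have "diameter (U p) powr s \<le> scale * Dnorm X (cmp \<phi> (fst p) 1 n) powr t"
      using diameter_cmp_image_powr_le[OF n _ c e(2)[OF c]] p e(1) \<open>0 \<le> t\<close> \<open>t \<le> s\<close>
      by (auto simp: U_def scale_def)
    then have "ennreal (diameter (U p) powr s)
        \<le> ennreal (scale * Dnorm X (cmp \<phi> (fst p) 1 n) powr t)"
      by (rule ennreal_leI)
    also have "\<dots> = ennreal scale * ennreal (Dnorm X (cmp \<phi> (fst p) 1 n) powr t)"
      by (rule ennreal_mult) (simp_all add: scale_def)
    finally show ?thesis .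
  qed
  have cover: "limit_set X I \<phi> \<subseteq> (\<Union>p\<in>words I n \<times> F. U p)"
  proof
    fix x assume "x \<in> limit_set X I \<phi>"
    then have "x \<in> (\<Union>w\<in>words I n. cmp \<phi> w 1 n ` X)" by (simp add: limit_set_def)
    then obtain w y where wy: "w \<in> words I n" "y \<in> X" "x = cmp \<phi> w 1 n y" by blast
    then obtain c where c: "c \<in> F" "y \<in> ball c e" using F(3) by blast
    then have "x \<in> U (w, c)" using wy by (auto simp: U_def)
    then show "x \<in> (\<Union>p\<in>words I n \<times> F. U p)" using wy(1) c(1) by blast
  qed
  have "countable (words I n \<times> F)"
    using F(1) by (auto simp: words_def intro: countable_PiE countable_finite)
  have "0 \<le> 2 * e * K * \<eta> ^ n" using e(1) eta_pos K_ge_1 by simp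
  then have "0 \<le> \<delta>" using \<delta> by linarith
  have "hausdorff_pre s \<delta> (limit_set X I \<phi>)
      \<le> infsum (\<lambda>p. ennreal (diameter (U p) powr s)) (words I n \<times> F)"
    using \<open>countable (words I n \<times> F)\<close> cover small \<open>0 \<le> \<delta>\<close>
    by (intro hausdorff_pre_le_infsum_cover) auto
  also have "\<dots> \<le> infsum (\<lambda>p. ennreal scale * ennreal (Dnorm X (cmp \<phi> (fst p) 1 n) powr t))
      (words I n \<times> F)"
    using summand_le by (intro infsum_mono nonneg_summable_on_complete) auto
  also have "\<dots> \<le> of_nat (card F) * ennreal scale * Zn X I \<phi> n t"
    unfolding Zn_def by (rule infsum_Times_finite_le[OF F(1)])
  finally show ?thesis by (simp add: scale_def)
qed

lemma hausdorff_measure_limit_set_eq_0: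
  assumes "0 \<le> t" "t < s" and P: "lower_pressure X I \<phi> t \<le> 0"
  shows "hausdorff_measure s (limit_set X I \<phi>) = 0"
proof -
  obtain e where e: "0 < e" "(\<Union>c\<in>X. cball c e) \<subseteq> V"
    using compact_subset_open_imp_cball_epsilon_subset[OF compact_X open_V X_subset_V] by blast
  obtain F where F: "finite F" "F \<subseteq> X" "X \<subseteq> (\<Union>c\<in>F. ball c e)"
    using compactE_image[OF compact_X, of X "\<lambda>c. ball c e"] e(1) by force
  define C where "C = 2 * e * K"
  define q where "q = \<eta> powr (s - t)"
  have C: "0 < C" using e(1) K_ge_1 by (simp add: C_def)
  have q: "0 < q" "q < 1"
    using powr_less_mono2[of "s - t" \<eta> 1] eta_pos eta_less_1 \<open>t < s\<close> by (auto simp: q_def)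
  \<comment> \<open>Any \<open>\<epsilon>\<close> with \<open>q * exp \<epsilon> < 1\<close> absorbs the subexponential growth of \<open>Zn\<close>
    along a subsequence.\<close>
  define \<epsilon> where "\<epsilon> = ln (1 / q) / 2"
  define r where "r = q * exp \<epsilon>"
  have "0 < \<epsilon>" using q by (simp add: \<epsilon>_def)
  have r: "0 < r" "r < 1"
  proof -
    have "exp \<epsilon> < exp (ln (1 / q))" using \<open>0 < \<epsilon>\<close> by (simp add: \<epsilon>_def)
    then have "exp \<epsilon> < 1 / q" using q by simp
    then show "0 < r" "r < 1" using q by (auto simp: r_def field_simps)
  qed
  have pre_le: "hausdorff_pre s \<delta> (limit_set X I \<phi>) \<le> ennreal a" if "0 < \<delta>" "0 < a" for \<delta> a
  proof -
    define M where "M = real (card F) * C powr s"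
    have "0 \<le> M" by (simp add: M_def)
    have "eventually (\<lambda>n. \<eta> ^ n < \<delta> / C) sequentially"
      using eta_pos eta_less_1 C that by (intro order_tendstoD(2)[OF LIMSEQ_power_zero]) auto
    moreover have "eventually (\<lambda>n. r ^ n < a / (M + 1)) sequentially"
      using r that \<open>0 \<le> M\<close> by (intro order_tendstoD(2)[OF LIMSEQ_power_zero]) auto
    moreover have "eventually (\<lambda>n. n \<ge> 1) sequentially" by (rule eventually_ge_at_top)
    ultimately have "frequently (\<lambda>n. Zn X I \<phi> n t \<le> ennreal (exp \<epsilon> ^ n)
        \<and> \<eta> ^ n < \<delta> / C \<and> r ^ n < a / (M + 1) \<and> n \<ge> 1) sequentially"
      using frequently_Zn_le_exp_power[OF P \<open>0 < \<epsilon>\<close>]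
      by (intro frequently_eventually_frequently eventually_conj)
    then obtain n where n: "Zn X I \<phi> n t \<le> ennreal (exp \<epsilon> ^ n)" "\<eta> ^ n < \<delta> / C"
      "r ^ n < a / (M + 1)" "n \<ge> 1"
      using frequently_ex by blast
    have "C * \<eta> ^ n \<le> \<delta>" using n(2) C by (simp add: pos_less_divide_eq mult.commute)
    have "hausdorff_pre s \<delta> (limit_set X I \<phi>)
        \<le> of_nat (card F) * ennreal (C powr s * q ^ n) * Zn X I \<phi> n t"
      unfolding C_def q_def
      by (rule hausdorff_pre_limit_set_le[OF F e(1) _ n(4) \<open>C * \<eta> ^ n \<le> \<delta>\<close>[unfolded C_def]])
        (use e(2) assms(1,2) in auto)
    also have "\<dots> \<le> of_nat (card F) * ennreal (C powr s * q ^ n) * ennreal (exp \<epsilon> ^ n)"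
      using n(1) by (intro mult_left_mono) auto
    also have "\<dots> = ennreal (real (card F) * (C powr s * q ^ n) * exp \<epsilon> ^ n)"
      using q by (simp add: ennreal_mult ennreal_of_nat_eq_real_of_nat)
    also have "real (card F) * (C powr s * q ^ n) * exp \<epsilon> ^ n = M * r ^ n"
      by (simp add: M_def r_def power_mult_distrib)
    also have "\<dots> \<le> ennreal a"
    proof (rule ennreal_leI)
      have "M * r ^ n \<le> (M + 1) * r ^ n" using r by simp
      also have "\<dots> \<le> a" using n(3) \<open>0 \<le> M\<close> by (simp add: pos_less_divide_eq mult.commute)
      finally show "M * r ^ n \<le> a" .
    qed
    finally show ?thesis .
  qed
  have "hausdorff_pre s \<delta> (limit_set X I \<phi>) \<le> 0" if "0 < \<delta>" for \<delta>
  proof (rule ennreal_le_epsilon)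
    fix a :: real assume "0 < a"
    with pre_le[OF \<open>0 < \<delta>\<close>] show "hausdorff_pre s \<delta> (limit_set X I \<phi>) \<le> 0 + ennreal a" by simp
  qed
  then show ?thesis unfolding hausdorff_measure_def by (simp add: SUP_le_iff)
qed

end

lemma ncifs_constants_exist:
  assumes "compact X" "ncifs X I \<phi>"
  obtains V K \<eta> where "ncifs_constants X I \<phi> V K \<eta>"
proof -
  have maps: "\<forall>j\<ge>1. \<forall>i\<in>I j. \<phi> j i ` X \<subseteq> X"
    using assms(2) unfolding ncifs_def by (elim conjE) assumption
  have "\<exists>V K. open V \<and> connected V \<and> X \<subseteq> V \<and>
        (\<forall>j\<ge>1. \<forall>i\<in>I j. conformal_C1_on V (\<phi> j i)) \<and> K \<ge> 1 \<and>
        (\<forall>k\<ge>1. \<forall>m\<ge>1. \<forall>w. (\<forall>j\<in>{k..<k+m}. w j \<in> I j) \<longrightarrow>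
           (\<forall>x\<in>V. \<forall>y\<in>V. deriv_norm (cmp \<phi> w k m) x \<le> K * deriv_norm (cmp \<phi> w k m) y))"
    using assms(2) unfolding ncifs_def by (elim conjE) assumption
  moreover have "\<exists>\<eta><1. \<forall>j\<ge>1. \<forall>i\<in>I j. Dnorm X (\<phi> j i) \<le> \<eta>"
    using assms(2) unfolding ncifs_def by (elim conjE) assumption
  ultimately obtain V K \<eta> where V: "open V" "X \<subseteq> V" "\<forall>j\<ge>1. \<forall>i\<in>I j. conformal_C1_on V (\<phi> j i)"
    and K: "K \<ge> 1" "\<forall>k\<ge>1. \<forall>m\<ge>1. \<forall>w. (\<forall>j\<in>{k..<k+m}. w j \<in> I j) \<longrightarrow>
           (\<forall>x\<in>V. \<forall>y\<in>V. deriv_norm (cmp \<phi> w k m) x \<le> K * deriv_norm (cmp \<phi> w k m) y)"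
    and \<eta>: "\<eta> < 1" "\<forall>j\<ge>1. \<forall>i\<in>I j. Dnorm X (\<phi> j i) \<le> \<eta>"
    by blast
  \<comment> \<open>The contraction constant is made positive so that powers of it can be raised to
    real exponents.\<close>
  show thesis
  proof (rule that, intro ncifs_constants.intro)
    show "Dnorm X (\<phi> j i) \<le> max \<eta> (1/2)" if "j \<ge> 1" "i \<in> I j" for j i
      using \<eta>(2) that by (simp add: le_max_iff_disj)
    show "deriv_norm (cmp \<phi> w k m) x \<le> K * deriv_norm (cmp \<phi> w k m) y"
      if "k \<ge> 1" "m \<ge> 1" "\<forall>j\<in>{k..<k+m}. w j \<in> I j" "x \<in> V" "y \<in> V" for k m w x y
      using K(2) that by blast
  qed (use assms(1) maps V K(1) \<eta>(1) in \<open>auto simp: max_def\<close>)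
qed

theorem lemma2p8:
  fixes X :: "'a::euclidean_space set"
    and I :: "nat \<Rightarrow> nat set"
    and \<phi> :: "nat \<Rightarrow> nat \<Rightarrow> 'a \<Rightarrow> 'a"
  assumes "compact X"
    and "X = closure (interior X)"
    and "smooth_boundary X \<or> convex X"
    and "ncifs X I \<phi>"
  shows "hausdorff_dim (limit_set X I \<phi>) \<le> bowen_param X I \<phi>"
proof -
  obtain V K \<eta> where "ncifs_constants X I \<phi> V K \<eta>"
    using ncifs_constants_exist[OF assms(1,4)] .
  then interpret ncifs_constants X I \<phi> V K \<eta> .
  show ?thesis
  proof (rule hausdorff_dim_le_if_measure_zero_above[OF bowen_param_nonneg])
    fix s assume "bowen_param X I \<phi> < ereal s"
    then obtain t where t: "bowen_param X I \<phi> < ereal t" "ereal t < ereal s"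
      using ereal_dense2 by blast
    have "0 < ereal t" using bowen_param_nonneg t(1) by (rule le_less_trans)
    then have "0 \<le> t" by simp
    then show "hausdorff_measure s (limit_set X I \<phi>) = 0"
      using hausdorff_measure_limit_set_eq_0[OF _ _ lower_pressure_nonpos_above_bowen_param] t
      by simp
  qed
qed

end
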